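(* Let $Z_1^N$ be as in the context, started at $Z_1^N(0)=\lfloor N/\sqrt{\log N}\rfloor$. Then $$\frac{\varphi_N}{\sqrt{\log N}}\;T^N_{\lfloor N(1-1/\sqrt{\log N})\rfloor}\to0\quad\text{in probability as }N\to\infty.$$
   Context: Standing assumptions: $a>0$, $0<\varphi_N\le1$, and $-\log_N\varphi_N\to b\in[0,1)$ as $N\to\infty$. $Z_1^N$ is a continuous-time Markov chain on $\mathbb N_0$ that jumps from $k$ to $k+1$ at rate $(1+a\varphi_N)k$ and from $k$ to $k-1$ at rate $k$. For $k\in\mathbb N_0$, $T_k^N:=\inf\{t\ge0: Z_1^N(t)=k\}$. *)

theory Defs
  imports "HOL-Probability.Probability"
begin

text \<open>Pathwise construction of the birth-death chain Z jumping k to k+1 at rate (1+c)k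
  and k to k-1 at rate k (here c = a * phi_N), from independent Exp(1) clocks X (n, s):
  in the n-th visited state k > 0 the up clock rings after X (n, True) / ((1+c) k), the
  down clock after X (n, False) / k; the first to ring determines the jump and the
  holding time is their minimum (competing exponential clocks).\<close>

fun bd_chain :: "real \<Rightarrow> nat \<Rightarrow> (nat \<times> bool \<Rightarrow> real) \<Rightarrow> nat \<Rightarrow> nat" where
  "bd_chain c k0 X 0 = k0"
| "bd_chain c k0 X (Suc n) =
     (let k = bd_chain c k0 X n in
      if k = 0 then 0
      else if X (n, True) / ((1 + c) * real k) < X (n, False) / real k then k + 1 else k - 1)"

definition bd_hold :: "real \<Rightarrow> nat \<Rightarrow> (nat \<times> bool \<Rightarrow> real) \<Rightarrow> nat \<Rightarrow> ereal" where
  "bd_hold c k0 X n =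
     (let k = bd_chain c k0 X n in
      if k = 0 then \<infinity>
      else ereal (min (X (n, True) / ((1 + c) * real k)) (X (n, False) / real k)))"

definition bd_jump_time :: "real \<Rightarrow> nat \<Rightarrow> (nat \<times> bool \<Rightarrow> real) \<Rightarrow> nat \<Rightarrow> ereal" where
  "bd_jump_time c k0 X n = (\<Sum>i<n. bd_hold c k0 X i)"

text \<open>The continuous-time path Z(t) (t >= 0); after an explosion (a null event) it is set to 0.\<close>
definition bd_path :: "real \<Rightarrow> nat \<Rightarrow> (nat \<times> bool \<Rightarrow> real) \<Rightarrow> real \<Rightarrow> nat" where
  "bd_path c k0 X t =
     (if \<exists>n. ereal t < bd_jump_time c k0 X (Suc n)
      then bd_chain c k0 X (LEAST n. ereal t < bd_jump_time c k0 X (Suc n))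
      else 0)"

definition bd_hitting_time :: "real \<Rightarrow> nat \<Rightarrow> (nat \<times> bool \<Rightarrow> real) \<Rightarrow> nat \<Rightarrow> ereal" where
  "bd_hitting_time c k0 X k = Inf (ereal ` {t. 0 \<le> t \<and> bd_path c k0 X t = k})"

end

theory Submission
  imports Defs "HOL-Real_Asymp.Real_Asymp"
begin

(*
  Run the jump chain of Z from the independent Exp(1) clocks: it is a random walk with up
  probability p = (1 + c) / (2 + c), c = a phi_N, and its holding time in state k is at most
  X (n, False) / k. Stop the walk when it leaves (L, K), L = k0 / 2. Since (1 + c)^-k is
  harmonic, the walk drops to L with probability at most (1 + c)^-(k0/2); since its mean
  position grows by c / (2 + c) per step while it is inside, it is eventually stopped; and
  since ln k gains at least c / (2 (2 + c) k) per step in state k, the expected time spent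
  before reaching K is at most 2 (2 + c) / c * ln (K / k0). With k0 = N / sqrt (ln N) and
  K = N (1 - 1 / sqrt (ln N)), the time scaled by phi_N / sqrt (ln N) thus has expectation
  O(ln ln N / sqrt (ln N)) on the good event, whose complement is small because
  phi_N >= N^-beta for some beta < 1 makes c k0 tend to infinity.
*)

(* The jump chain bd_chain, frozen once it leaves (L, K), so that it has finite range. *)

fun stopped_walk :: "real \<Rightarrow> nat \<Rightarrow> nat \<Rightarrow> nat \<Rightarrow> (nat \<times> bool \<Rightarrow> real) \<Rightarrow> nat \<Rightarrow> nat" where
  "stopped_walk c L K k0 x 0 = k0"
| "stopped_walk c L K k0 x (Suc n) =
    (if stopped_walk c L K k0 x n \<in> {L<..<K} then
       (if x (n, True) < (1 + c) * x (n, False) then stopped_walk c L K k0 x n + 1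
        else stopped_walk c L K k0 x n - 1)
     else stopped_walk c L K k0 x n)"

lemma stopped_walk_range: "L \<le> k0 \<Longrightarrow> k0 \<le> K \<Longrightarrow> stopped_walk c L K k0 x n \<in> {L..K}"
  by (induction n) auto

lemma stopped_walk_stays:
  "stopped_walk c L K k0 x n \<notin> {L<..<K} \<Longrightarrow> stopped_walk c L K k0 x (n + d) = stopped_walk c L K k0 x n"
  by (induction d) auto

lemma stopped_walk_inside_earlier:
  assumes "stopped_walk c L K k0 x m \<in> {L<..<K}" "j \<le> m"
  shows "stopped_walk c L K k0 x j \<in> {L<..<K}"
  using stopped_walk_stays[of c L K k0 x j "m - j"] assms by fastforce

lemma bd_chain_eq_stopped_walk:
  assumes "0 < 1 + c" "\<And>j. j < n \<Longrightarrow> stopped_walk c L K k0 x j \<in> {L<..<K}"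
  shows "bd_chain c k0 x n = stopped_walk c L K k0 x n"
  using assms
proof (induction n)
  case (Suc n)
  define k where "k = stopped_walk c L K k0 x n"
  have k: "k \<in> {L<..<K}" using Suc.prems(2) by (simp add: k_def)
  then have "x (n, True) / ((1 + c) * real k) < x (n, False) / real k \<longleftrightarrow> x (n, True) < (1 + c) * x (n, False)"
    using \<open>0 < 1 + c\<close> by (simp add: divide_simps mult_ac)
  with Suc k show ?case by (simp add: Let_def k_def [symmetric])
qed simp

lemma bd_hitting_time_le_jump_time:
  assumes c: "0 < 1 + c" and x: "\<And>i. 0 < x i" and pos: "\<And>i. i \<le> s \<Longrightarrow> 0 < bd_chain c k0 x i"
  shows "bd_hitting_time c k0 x (bd_chain c k0 x s) \<le> bd_jump_time c k0 x s"
proof -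
  define h where "h i = min (x (i, True) / ((1 + c) * real (bd_chain c k0 x i))) (x (i, False) / real (bd_chain c k0 x i))" for i
  have h_pos: "0 < h i" if "i \<le> s" for i
    using pos[OF that] x[of "(i, True)"] x[of "(i, False)"] c by (simp add: h_def)
  have jump: "bd_jump_time c k0 x n = ereal (\<Sum>i<n. h i)" if "n \<le> Suc s" for n
    unfolding bd_jump_time_def sum_ereal[symmetric] using that pos
    by (intro sum.cong) (auto simp: bd_hold_def h_def Let_def)
  define t where "t = (\<Sum>i<s. h i)"
  have before_exit: "ereal t < bd_jump_time c k0 x (Suc s)"
    using jump[of "Suc s"] h_pos[of s] by (simp add: t_def)
  have "(LEAST n. ereal t < bd_jump_time c k0 x (Suc n)) = s"
  proof (rule Least_equality)
    fix n assume "ereal t < bd_jump_time c k0 x (Suc n)"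
    moreover have "(\<Sum>i<Suc n. h i) \<le> t" if "Suc n \<le> s"
      unfolding t_def using that h_pos by (intro sum_mono2) (auto intro: less_imp_le)
    ultimately show "s \<le> n" using jump[of "Suc n"] by (cases "Suc n \<le> s") auto
  qed (fact before_exit)
  moreover have "\<exists>n. ereal t < bd_jump_time c k0 x (Suc n)" using before_exit ..
  ultimately have "bd_path c k0 x t = bd_chain c k0 x s"
    unfolding bd_path_def by simp
  moreover have "0 \<le> t" unfolding t_def using h_pos by (intro sum_nonneg) (auto intro: less_imp_le)
  ultimately have "bd_hitting_time c k0 x (bd_chain c k0 x s) \<le> ereal t"
    unfolding bd_hitting_time_def by (intro Inf_lower) auto
  then show ?thesis using jump[of s] by (simp add: t_def)
qed

lemma bd_hitting_time_le_stopped_walk_sum: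
  assumes c: "0 < 1 + c" and x: "\<And>i. 0 < x i" and "0 < K" and hit: "stopped_walk c L K k0 x m = K"
  shows "bd_hitting_time c k0 x K \<le>
    ereal (\<Sum>i<m. x (i, False) * (indicator {L<..<K} (stopped_walk c L K k0 x i) / real (stopped_walk c L K k0 x i)))"
proof -
  define w where "w = stopped_walk c L K k0 x"
  have "\<exists>j. w j \<notin> {L<..<K}" using hit by (intro exI[of _ m]) (simp add: w_def)
  define s where "s = (LEAST j. w j \<notin> {L<..<K})"
  have inside: "w i \<in> {L<..<K}" if "i < s" for i
    using not_less_Least[OF that [unfolded s_def]] by simp
  have exit: "w s \<notin> {L<..<K}"
    using LeastI_ex[OF \<open>\<exists>j. w j \<notin> {L<..<K}\<close>] by (simp add: s_def)
  have "s \<le> m" unfolding s_def using hit by (intro Least_le) (simp add: w_def)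
  have stays: "w i = w s" if "s \<le> i" for i
    using stopped_walk_stays[OF exit [unfolded w_def], of "i - s"] that by (simp add: w_def)
  have ws: "w s = K" using stays[OF \<open>s \<le> m\<close>] hit by (simp add: w_def)
  have after: "w i = K" if "s \<le> i" for i using stays[OF that] ws by simp
  have chain: "bd_chain c k0 x i = w i" if "i \<le> s" for i
    unfolding w_def using that inside by (intro bd_chain_eq_stopped_walk c) (simp add: w_def)
  have w_pos: "0 < w i" if "i \<le> s" for i
    using inside[of i] that ws \<open>0 < K\<close> by (cases "i = s") auto
  have "bd_hitting_time c k0 x (bd_chain c k0 x s) \<le> bd_jump_time c k0 x s"
    by (rule bd_hitting_time_le_jump_time[OF c x]) (simp add: chain w_pos)
  then have "bd_hitting_time c k0 x K \<le> bd_jump_time c k0 x s"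
    using chain ws by simp
  also have "\<dots> \<le> (\<Sum>i<s. ereal (x (i, False) / real (w i)))"
    unfolding bd_jump_time_def using chain w_pos by (intro sum_mono) (auto simp: bd_hold_def Let_def)
  also have "\<dots> = ereal (\<Sum>i<m. x (i, False) * (indicator {L<..<K} (w i) / real (w i)))"
  proof -
    have "(\<Sum>i<m. x (i, False) * (indicator {L<..<K} (w i) / real (w i))) =
          (\<Sum>i<s. x (i, False) * (indicator {L<..<K} (w i) / real (w i)))"
      using \<open>s \<le> m\<close> after by (intro sum.mono_neutral_right) auto
    also have "\<dots> = (\<Sum>i<s. x (i, False) / real (w i))"
      using inside by (intro sum.cong) auto
    finally show ?thesis by simp
  qed
  finally show ?thesis by (simp add: w_def)
qed

lemma measurable_stopped_walk:
  assumes "\<And>i. fst i < n \<Longrightarrow> (\<lambda>\<omega>. x \<omega> i) \<in> borel_measurable N"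
  shows "(\<lambda>\<omega>. stopped_walk c L K k0 (x \<omega>) n) \<in> measurable N (count_space UNIV)"
  using assms
proof (induction n)
  case (Suc n)
  then have [measurable]: "(\<lambda>\<omega>. stopped_walk c L K k0 (x \<omega>) n) \<in> measurable N (count_space UNIV)"
      "(\<lambda>\<omega>. x \<omega> (n, True)) \<in> borel_measurable N" "(\<lambda>\<omega>. x \<omega> (n, False)) \<in> borel_measurable N"
    by auto
  show ?case by simp measurable
qed simp

lemma stopped_walk_restrict:
  "n \<le> m \<Longrightarrow> stopped_walk c L K k0 (restrict x {i. fst i < m}) n = stopped_walk c L K k0 x n"
  by (induction n) auto

lemma nn_integral_exponential_density_mult_exp:
  assumes t: "0 < t"
  shows "(\<integral>\<^sup>+z. exponential_density 1 z * ennreal (exp (- z / t)) \<partial>lborel) = ennreal (t / (1 + t))"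
proof -
  have "ennreal (exponential_density 1 z) * ennreal (exp (- z / t))
      = ennreal (t / (1 + t)) * ennreal (exponential_density ((1 + t) / t) z)" for z
  proof -
    have "- z + - z / t = - z * ((1 + t) / t)" using t by (simp add: field_simps)
    then have "exp (- z) * exp (- z / t) = exp (- z * ((1 + t) / t))" by (simp add: exp_add [symmetric])
    then have "exponential_density 1 z * exp (- z / t) = t / (1 + t) * exponential_density ((1 + t) / t) z"
      using t by (simp add: exponential_density_def)
    moreover have "0 \<le> exponential_density 1 z" "0 \<le> exponential_density ((1 + t) / t) z"
      using t by (simp_all add: exponential_density_nonneg)
    ultimately show ?thesis using t by (simp add: ennreal_mult [symmetric])
  qed
  then have "(\<integral>\<^sup>+z. exponential_density 1 z * ennreal (exp (- z / t)) \<partial>lborel)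
      = (\<integral>\<^sup>+z. ennreal (t / (1 + t)) * exponential_density ((1 + t) / t) z \<partial>lborel)"
    by simp
  also have "\<dots> = ennreal (t / (1 + t))"
    using t prob_space.emeasure_space_1[OF prob_space_exponential_density, of "(1 + t) / t"]
    by (simp add: nn_integral_cmult emeasure_density)
  finally show ?thesis .
qed

lemma (in prob_space) prob_exponential_less_mult:
  assumes ind: "indep_var borel Z borel Y"
    and Z: "distributed M lborel Z (exponential_density 1)"
    and Y: "distributed M lborel Y (exponential_density 1)" and t: "0 < t"
  shows "prob {\<omega> \<in> space M. Z \<omega> < t * Y \<omega>} = t / (1 + t)"
proof -
  have [measurable]: "Z \<in> borel_measurable M" "Y \<in> borel_measurable M"
    using Z Y by (auto dest: distributed_measurable)
  define S where "S = {p :: real \<times> real. fst p < t * snd p}"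
  have "{p \<in> space (borel \<Otimes>\<^sub>M borel). fst p < t * snd p} \<in> sets (borel \<Otimes>\<^sub>M borel)"
    by measurable
  then have S: "S \<in> sets (borel \<Otimes>\<^sub>M borel)" by (simp add: S_def space_pair_measure)
  interpret Y: prob_space "distr M borel Y" by (rule prob_space_distr) simp
  have density_Z: "distr M borel Z = density lborel (exponential_density 1)"
    using Z by (simp add: distributed_def cong: distr_cong)
  have tail_Y: "emeasure (distr M borel Y) (Pair z -` S) = ennreal (exp (- z / t))" if "0 \<le> z" for z
  proof -
    have "emeasure (distr M borel Y) (Pair z -` S) = emeasure M {\<omega> \<in> space M. z / t < Y \<omega>}"
      using t by (subst emeasure_distr) (auto simp: S_def field_simps intro!: arg_cong[where f = "emeasure M"])
    also have "\<dots> = ennreal (exp (- z / t))"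
      using exponential_distributedD_gt[OF Y, of "z / t"] that t by (simp add: emeasure_eq_measure)
    finally show ?thesis .
  qed
  have ZY: "(\<lambda>\<omega>. (Z \<omega>, Y \<omega>)) \<in> measurable M (borel \<Otimes>\<^sub>M borel)" by measurable
  have "emeasure M {\<omega> \<in> space M. Z \<omega> < t * Y \<omega>} = emeasure (distr M (borel \<Otimes>\<^sub>M borel) (\<lambda>\<omega>. (Z \<omega>, Y \<omega>))) S"
    unfolding emeasure_distr[OF ZY S] by (auto simp: S_def intro!: arg_cong[where f = "emeasure M"])
  also have "\<dots> = emeasure (distr M borel Z \<Otimes>\<^sub>M distr M borel Y) S"
    using ind by (simp add: indep_var_distribution_eq)
  also have "\<dots> = (\<integral>\<^sup>+z. emeasure (distr M borel Y) (Pair z -` S) \<partial>distr M borel Z)"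
    using S by (intro Y.emeasure_pair_measure_alt) simp
  also have "\<dots> = (\<integral>\<^sup>+z. exponential_density 1 z * emeasure (distr M borel Y) (Pair z -` S) \<partial>lborel)"
    unfolding density_Z using S by (subst nn_integral_density) (auto intro!: Y.measurable_emeasure_Pair)
  also have "\<dots> = (\<integral>\<^sup>+z. exponential_density 1 z * ennreal (exp (- z / t)) \<partial>lborel)"
    using tail_Y by (intro nn_integral_cong) (simp add: exponential_density_def)
  also have "\<dots> = ennreal (t / (1 + t))"
    by (rule nn_integral_exponential_density_mult_exp[OF t])
  finally show ?thesis using t by (simp add: emeasure_eq_measure)
qed

lemma ln_mean_step_ge:
  fixes k :: nat and p :: real
  assumes p: "1 / 2 < p" "p < 1" and k: "4 \<le> (2 * p - 1) * real k"
  shows "ln (real k) + (2 * p - 1) / 2 * (1 / real k) \<le> p * ln (real (k + 1)) + (1 - p) * ln (real (k - 1))"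
proof -
  define d where "d = 2 * p - 1"
  have "d * real k \<le> real k" using p by (intro mult_left_le_one_le) (auto simp: d_def)
  then have k4: "4 \<le> real k" using k by (simp add: d_def)
  define x where "x = 1 / real k"
  have x: "0 \<le> x" "x \<le> 1 / 2" "4 * x \<le> d" using k k4 by (auto simp: x_def d_def field_simps)
  have "real (k + 1) = real k * (1 + x)" using k4 by (simp add: x_def field_simps)
  then have ln_up: "ln (real (k + 1)) = ln (real k) + ln (1 + x)" using k4 x by (simp add: ln_mult)
  have "real (k - 1) = real k * (1 - x)" using k4 by (simp add: x_def field_simps)
  then have ln_down: "ln (real (k - 1)) = ln (real k) + ln (1 - x)" using k4 x by (simp add: ln_mult)
  have "x - x\<^sup>2 \<le> ln (1 + x)" using x by (intro ln_one_plus_pos_lower_bound) auto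
  moreover have "- x - 2 * x\<^sup>2 \<le> ln (1 - x)" using x by (intro ln_one_minus_pos_lower_bound) auto
  ultimately have "p * (x - x\<^sup>2) + (1 - p) * (- x - 2 * x\<^sup>2) \<le> p * ln (1 + x) + (1 - p) * ln (1 - x)"
    using p by (intro add_mono mult_left_mono) auto
  moreover have "p * (x - x\<^sup>2) + (1 - p) * (- x - 2 * x\<^sup>2) = d * x - (2 - p) * x\<^sup>2"
    by (simp add: d_def algebra_simps power2_eq_square)
  moreover have "(2 - p) * x\<^sup>2 \<le> d / 2 * x"
  proof -
    have "(2 - p) * x\<^sup>2 \<le> 2 * x\<^sup>2" using p by (intro mult_right_mono) auto
    also have "\<dots> = (4 * x) * x / 2" by (simp add: power2_eq_square)
    also have "\<dots> \<le> d * x / 2" using x by (intro divide_right_mono mult_right_mono) auto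
    finally show ?thesis by simp
  qed
  ultimately have "d / 2 * x \<le> p * ln (1 + x) + (1 - p) * ln (1 - x)" by linarith
  then show ?thesis unfolding ln_up ln_down by (simp add: x_def d_def algebra_simps)
qed

locale exp_clock_walk = prob_space M for M :: "'a measure" +
  fixes X :: "nat \<times> bool \<Rightarrow> 'a \<Rightarrow> real" and c :: real and L K k0 :: nat
  assumes indep_clocks: "indep_vars (\<lambda>_. borel) X UNIV"
    and exponential_clocks: "\<And>i. distributed M lborel (X i) (exponential_density 1)"
    and c_pos: "0 < c" and start_between: "L \<le> k0" "k0 \<le> K"
begin

definition walk :: "nat \<Rightarrow> 'a \<Rightarrow> nat" where
  "walk n \<omega> = stopped_walk c L K k0 (\<lambda>i. X i \<omega>) n"

definition walk_mean :: "nat \<Rightarrow> (nat \<Rightarrow> real) \<Rightarrow> real" where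
  "walk_mean n f = (\<integral>\<omega>. f (walk n \<omega>) \<partial>M)"

definition p_up :: real where
  "p_up = (1 + c) / (2 + c)"

definition drift :: real where
  "drift = c / (2 + c)"

definition walk_step :: "(nat \<Rightarrow> real) \<Rightarrow> nat \<Rightarrow> real" where
  "walk_step f k = (if k \<in> {L<..<K} then p_up * f (k + 1) + (1 - p_up) * f (k - 1) else f k)"

lemma drift_pos: "0 < drift"
  using c_pos by (simp add: drift_def)

lemma p_up_bounds: "1 / 2 < p_up" "p_up < 1"
  using c_pos by (auto simp: p_up_def field_simps)

lemma drift_eq: "drift = 2 * p_up - 1"
  using c_pos by (simp add: drift_def p_up_def field_simps)

lemma measurable_clock [measurable]: "X i \<in> borel_measurable M"
  using distributed_measurable[OF exponential_clocks] by simp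

lemma clocks_pos_AE: "AE \<omega> in M. \<forall>i. 0 < X i \<omega>"
proof -
  have "AE \<omega> in M. 0 < X i \<omega>" for i
  proof (rule AE_I[where N = "{\<omega> \<in> space M. X i \<omega> \<le> 0}"])
    show "emeasure M {\<omega> \<in> space M. X i \<omega> \<le> 0} = 0"
      using exponential_distributedD_le[OF exponential_clocks[of i], of 0] by (simp add: emeasure_eq_measure)
  qed auto
  then show ?thesis by (simp add: AE_all_countable)
qed

lemma measurable_walk [measurable]: "walk n \<in> measurable M (count_space UNIV)"
  unfolding walk_def by (rule measurable_stopped_walk) simp

lemma sets_walk: "{\<omega> \<in> space M. walk n \<omega> \<in> A} \<in> events"
  using measurable_sets[OF measurable_walk, of A] by (simp add: vimage_def Int_def conj_commute)

lemma walk_range: "walk n \<omega> \<in> {L..K}"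
  unfolding walk_def using stopped_walk_range[OF start_between] .

lemma integrable_walk: "integrable M (\<lambda>\<omega>. f (walk n \<omega>) :: real)"
proof (rule integrable_const_bound[where B = "\<Sum>k\<le>K. \<bar>f k\<bar>"])
  show "AE \<omega> in M. norm (f (walk n \<omega>)) \<le> (\<Sum>k\<le>K. \<bar>f k\<bar>)"
  proof (rule AE_I2)
    fix \<omega>
    have "walk n \<omega> \<in> {..K}" using walk_range by auto
    then show "norm (f (walk n \<omega>)) \<le> (\<Sum>k\<le>K. \<bar>f k\<bar>)"
      using member_le_sum[of "walk n \<omega>" "{..K}" "\<lambda>k. \<bar>f k\<bar>"] by simp
  qed
qed simp

lemma walk_mean_0: "walk_mean 0 f = f k0"
  by (simp add: walk_mean_def walk_def prob_space)

lemma walk_mean_const: "walk_mean n (\<lambda>_. a) = a"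
  by (simp add: walk_mean_def prob_space)

lemma walk_mean_add: "walk_mean n (\<lambda>k. f k + g k) = walk_mean n f + walk_mean n g"
  unfolding walk_mean_def by (intro Bochner_Integration.integral_add integrable_walk)

lemma walk_mean_diff: "walk_mean n (\<lambda>k. f k - g k) = walk_mean n f - walk_mean n g"
  unfolding walk_mean_def by (intro Bochner_Integration.integral_diff integrable_walk)

lemma walk_mean_cmult: "walk_mean n (\<lambda>k. a * f k) = a * walk_mean n f"
  by (simp add: walk_mean_def)

lemma walk_mean_mono: "(\<And>k. k \<in> {L..K} \<Longrightarrow> f k \<le> g k) \<Longrightarrow> walk_mean n f \<le> walk_mean n g"
  unfolding walk_mean_def using walk_range by (intro integral_mono integrable_walk) auto

lemma walk_mean_cong: "(\<And>k. k \<in> {L..K} \<Longrightarrow> f k = g k) \<Longrightarrow> walk_mean n f = walk_mean n g"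
  unfolding walk_mean_def using walk_range by (intro Bochner_Integration.integral_cong) auto

lemma prob_walk: "prob {\<omega> \<in> space M. walk n \<omega> \<in> A} = walk_mean n (indicator A)"
proof -
  have "walk_mean n (indicator A) = (\<integral>\<omega>. indicator {\<omega> \<in> space M. walk n \<omega> \<in> A} \<omega> \<partial>M)"
    unfolding walk_mean_def by (intro Bochner_Integration.integral_cong) (auto simp: indicator_def)
  then show ?thesis by (simp add: Int_absorb2 subset_iff)
qed

lemma indep_clocks_pair: "i \<noteq> j \<Longrightarrow> indep_var borel (X i) borel (X j)"
  using indep_var_compose[OF indep_var_restrict[OF indep_clocks, of "{i}" "{j}"],
      of "\<lambda>y. y i" borel "\<lambda>y. y j" borel]
  by (simp add: comp_def measurable_component_singleton)

lemma indep_walk_clocks: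
  fixes f :: "nat \<Rightarrow> real"
  assumes [measurable]: "g \<in> borel_measurable (borel \<Otimes>\<^sub>M borel)"
  shows "indep_var borel (\<lambda>\<omega>. f (walk n \<omega>)) borel (\<lambda>\<omega>. g (X (n, True) \<omega>, X (n, False) \<omega>))"
proof -
  let ?past = "{i :: nat \<times> bool. fst i < n}" and ?now = "{i :: nat \<times> bool. fst i = n}"
  have "(\<lambda>y. stopped_walk c L K k0 y n) \<in> measurable (PiM ?past (\<lambda>_. borel)) (count_space UNIV)"
    by (rule measurable_stopped_walk[where x = "\<lambda>y. y"]) (simp add: measurable_component_singleton)
  then have "(\<lambda>y. f (stopped_walk c L K k0 y n)) \<in> borel_measurable (PiM ?past (\<lambda>_. borel))"
    by (rule measurable_compose) simp
  moreover have "(\<lambda>y. g (y (n, True), y (n, False))) \<in> borel_measurable (PiM ?now (\<lambda>_. borel))"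
  proof -
    have [measurable]: "(\<lambda>y. y (n, b)) \<in> borel_measurable (PiM ?now (\<lambda>_. borel))" for b
      by (rule measurable_component_singleton) simp
    show ?thesis by measurable
  qed
  ultimately have "indep_var borel ((\<lambda>y. f (stopped_walk c L K k0 y n)) \<circ> (\<lambda>\<omega>. restrict (\<lambda>i. X i \<omega>) ?past))
      borel ((\<lambda>y. g (y (n, True), y (n, False))) \<circ> (\<lambda>\<omega>. restrict (\<lambda>i. X i \<omega>) ?now))"
    by (intro indep_var_compose[OF indep_var_restrict[OF indep_clocks]]) auto
  then show ?thesis using stopped_walk_restrict[of n n] by (simp add: comp_def walk_def)
qed

lemma prob_up: "prob {\<omega> \<in> space M. X (n, True) \<omega> < (1 + c) * X (n, False) \<omega>} = p_up"
  using prob_exponential_less_mult[OF indep_clocks_pair exponential_clocks exponential_clocks, of "(n, True)" "(n, False)" "1 + c"]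
    c_pos by (simp add: p_up_def add_ac)

lemma walk_mean_Suc: "walk_mean (Suc n) f = walk_mean n (walk_step f)"
proof -
  define up where "up \<omega> = (if X (n, True) \<omega> < (1 + c) * X (n, False) \<omega> then 1 else 0 :: real)" for \<omega>
  define stay where "stay k = (if k \<in> {L<..<K} then f (k - 1) else f k)" for k
  define jump where "jump k = (if k \<in> {L<..<K} then f (k + 1) - f (k - 1) else 0)" for k
  have ind: "indep_var borel (\<lambda>\<omega>. jump (walk n \<omega>)) borel up"
    unfolding up_def by (rule indep_walk_clocks[where g = "\<lambda>(u, v). if u < (1 + c) * v then 1 else 0", simplified]) measurable
  have up_int: "integrable M up"
    unfolding up_def by (intro integrable_const_bound[where B = 1]) auto
  have "(\<integral>\<omega>. up \<omega> \<partial>M) = (\<integral>\<omega>. indicator {\<omega> \<in> space M. X (n, True) \<omega> < (1 + c) * X (n, False) \<omega>} \<omega> \<partial>M)"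
    unfolding up_def by (intro Bochner_Integration.integral_cong) (auto simp: indicator_def)
  then have up_mean: "(\<integral>\<omega>. up \<omega> \<partial>M) = p_up"
    using prob_up[of n] by (simp add: Int_absorb2 subset_iff)
  have "f (walk (Suc n) \<omega>) = stay (walk n \<omega>) + jump (walk n \<omega>) * up \<omega>" for \<omega>
    by (simp add: walk_def stay_def jump_def up_def)
  then have "walk_mean (Suc n) f = walk_mean n stay + (\<integral>\<omega>. jump (walk n \<omega>) * up \<omega> \<partial>M)"
    unfolding walk_mean_def
    by (simp add: integrable_walk indep_var_integrable[OF ind integrable_walk up_int])
  also have "\<dots> = walk_mean n (\<lambda>k. stay k + p_up * jump k)"
    using indep_var_lebesgue_integral[OF ind integrable_walk up_int]
    by (simp add: up_mean walk_mean_add walk_mean_cmult walk_mean_def [symmetric] mult.commute)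
  also have "\<dots> = walk_mean n (walk_step f)"
    by (intro walk_mean_cong) (simp add: stay_def jump_def walk_step_def algebra_simps)
  finally show ?thesis .
qed

lemma walk_mean_telescope: "walk_mean n f = f k0 + (\<Sum>j<n. walk_mean j (\<lambda>k. walk_step f k - f k))"
proof (induction n)
  case (Suc n)
  have "walk_mean (Suc n) f = walk_mean n f + walk_mean n (\<lambda>k. walk_step f k - f k)"
    by (simp add: walk_mean_Suc walk_mean_diff)
  with Suc show ?case by simp
qed (simp add: walk_mean_0)

lemma walk_mean_clock: "(\<integral>\<omega>. X (n, False) \<omega> * f (walk n \<omega>) \<partial>M) = walk_mean n f"
  and integrable_clock_walk: "integrable M (\<lambda>\<omega>. X (n, False) \<omega> * f (walk n \<omega>))"
proof -
  have ind: "indep_var borel (\<lambda>\<omega>. f (walk n \<omega>)) borel (X (n, False))"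
    using indep_walk_clocks[where g = snd and f = f and n = n] by simp
  have X_int: "integrable M (X (n, False))"
    using erlang_ith_moment_integrable[OF _ exponential_clocks[of "(n, False)"], of 1] by simp
  have "expectation (X (n, False)) = 1"
    using exponential_distributed_expectation[OF _ exponential_clocks[of "(n, False)"]] by simp
  then show "(\<integral>\<omega>. X (n, False) \<omega> * f (walk n \<omega>) \<partial>M) = walk_mean n f"
    using indep_var_lebesgue_integral[OF ind integrable_walk X_int] by (simp add: walk_mean_def mult.commute)
  show "integrable M (\<lambda>\<omega>. X (n, False) \<omega> * f (walk n \<omega>))"
    using indep_var_integrable[OF ind integrable_walk X_int] by (simp add: mult.commute)
qed

lemma walk_mean_harmonic: "walk_mean n (\<lambda>k. (1 / (1 + c)) ^ k) = (1 / (1 + c)) ^ k0"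
proof -
  have "walk_step (\<lambda>k. (1 / (1 + c)) ^ k) k = (1 / (1 + c)) ^ k" for k
  proof (cases "k \<in> {L<..<K}")
    case True
    then obtain j where j: "k = Suc j" by (cases k) auto
    have "p_up * (1 / (1 + c)) ^ (k + 1) + (1 - p_up) * (1 / (1 + c)) ^ (k - 1)
        = (1 / (1 + c)) ^ j * (p_up * (1 / (1 + c))\<^sup>2 + (1 - p_up))"
      by (simp add: j algebra_simps power2_eq_square)
    also have "p_up * (1 / (1 + c))\<^sup>2 + (1 - p_up) = 1 / (1 + c)"
      using c_pos by (simp add: p_up_def divide_simps power2_eq_square)
    finally show ?thesis using True by (simp add: walk_step_def j)
  qed (auto simp: walk_step_def)
  then show ?thesis using walk_mean_telescope[of n "\<lambda>k. (1 / (1 + c)) ^ k"] by (simp add: walk_mean_const)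
qed

lemma prob_walk_le_L: "prob {\<omega> \<in> space M. walk m \<omega> \<le> L} \<le> (1 / (1 + c)) ^ (k0 - L)"
proof -
  define r where "r = 1 / (1 + c)"
  have r: "0 < r" "r \<le> 1" using c_pos by (auto simp: r_def)
  have "prob {\<omega> \<in> space M. walk m \<omega> \<le> L} = walk_mean m (indicator {..L})"
    using prob_walk[of m "{..L}"] by simp
  also have "\<dots> \<le> walk_mean m (\<lambda>k. r ^ k / r ^ L)"
    using r by (intro walk_mean_mono) (auto simp: power_decreasing indicator_def)
  also have "\<dots> = r ^ k0 / r ^ L"
    using walk_mean_harmonic[of m] walk_mean_cmult[of m "1 / r ^ L" "\<lambda>k. r ^ k"] by (simp add: r_def)
  also have "\<dots> = r ^ (k0 - L)" using r start_between by (simp add: power_diff)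
  finally show ?thesis by (simp add: r_def)
qed

lemma prob_walk_inside:
  assumes "0 < m"
  shows "prob {\<omega> \<in> space M. walk m \<omega> \<in> {L<..<K}} \<le> real K / (drift * real m)"
proof -
  define P where "P j = walk_mean j (indicator {L<..<K})" for j
  have "P m \<le> P j" if "j \<le> m" for j
    unfolding P_def walk_mean_def using stopped_walk_inside_earlier[OF _ that]
    by (intro integral_mono integrable_walk) (auto simp: walk_def indicator_def)
  then have "real m * P m \<le> (\<Sum>j<m. P j)"
    using sum_mono[of "{..<m}" "\<lambda>_. P m" P] by simp
  have "walk_step real k - real k = drift * indicator {L<..<K} k" for k
    by (cases "k \<in> {L<..<K}") (auto simp: walk_step_def drift_eq algebra_simps)
  then have mean_real: "walk_mean m real = real k0 + drift * (\<Sum>j<m. P j)"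
    using walk_mean_telescope[of m real] by (simp add: P_def walk_mean_cmult sum_distrib_left)
  have "drift * (real m * P m) \<le> drift * (\<Sum>j<m. P j)"
    using \<open>real m * P m \<le> (\<Sum>j<m. P j)\<close> drift_pos by (intro mult_left_mono) auto
  also have "\<dots> \<le> walk_mean m real" using mean_real by simp
  also have "\<dots> \<le> real K"
    using walk_mean_mono[of real "\<lambda>_. real K" m] by (simp add: walk_mean_const)
  finally show ?thesis
    using prob_walk[of m "{L<..<K}"] drift_pos assms by (simp add: P_def field_simps)
qed

lemma sum_walk_mean_inverse_le:
  assumes "1 \<le> L" "4 \<le> drift * real L"
  shows "(\<Sum>j<m. walk_mean j (\<lambda>k. indicator {L<..<K} k / real k)) \<le> 2 / drift * (ln (real K) - ln (real k0))"
proof -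
  have step: "drift / 2 * (indicator {L<..<K} k / real k) \<le> walk_step (\<lambda>k. ln (real k)) k - ln (real k)" for k
  proof (cases "k \<in> {L<..<K}")
    case True
    then have "drift * real L \<le> drift * real k" using drift_pos by (intro mult_left_mono) auto
    then have "4 \<le> (2 * p_up - 1) * real k" using assms(2) by (simp add: drift_eq)
    moreover have "real (k - 1) = real k - 1" using True by auto
    ultimately show ?thesis
      using ln_mean_step_ge[OF p_up_bounds, of k] True by (simp add: walk_step_def drift_eq)
  qed (auto simp: walk_step_def)
  have "drift / 2 * (\<Sum>j<m. walk_mean j (\<lambda>k. indicator {L<..<K} k / real k))
      \<le> (\<Sum>j<m. walk_mean j (\<lambda>k. walk_step (\<lambda>k. ln (real k)) k - ln (real k)))"
    unfolding sum_distrib_left walk_mean_cmult [symmetric] by (intro sum_mono walk_mean_mono step)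
  also have "\<dots> = walk_mean m (\<lambda>k. ln (real k)) - ln (real k0)"
    using walk_mean_telescope[of m "\<lambda>k. ln (real k)"] by simp
  also have "walk_mean m (\<lambda>k. ln (real k)) \<le> ln (real K)"
    using walk_mean_mono[of "\<lambda>k. ln (real k)" "\<lambda>_. ln (real K)" m] assms(1) by (simp add: walk_mean_const)
  finally have "drift / 2 * (\<Sum>j<m. walk_mean j (\<lambda>k. indicator {L<..<K} k / real k)) \<le> ln (real K) - ln (real k0)"
    by simp
  from mult_left_mono[OF this, of "2 / drift"] show ?thesis using drift_pos by simp
qed

(* The holding time in state k is at most the ring time X (n, False) / k of the down clock. *)

definition exit_time_bound :: "nat \<Rightarrow> 'a \<Rightarrow> real" where
  "exit_time_bound m \<omega> = (\<Sum>j<m. X (j, False) \<omega> * (indicator {L<..<K} (walk j \<omega>) / real (walk j \<omega>)))"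

lemma hitting_time_le_exit_time_bound:
  assumes "\<forall>i. 0 < X i \<omega>" "walk m \<omega> = K" "0 < K"
  shows "bd_hitting_time c k0 (\<lambda>i. X i \<omega>) K \<le> ereal (exit_time_bound m \<omega>)"
  using bd_hitting_time_le_stopped_walk_sum[of c "\<lambda>i. X i \<omega>" K L k0 m] assms c_pos
  by (simp add: exit_time_bound_def walk_def)

lemma integrable_exit_time_bound: "integrable M (exit_time_bound m)"
  unfolding exit_time_bound_def by (intro Bochner_Integration.integrable_sum integrable_clock_walk)

lemma measurable_exit_time_bound [measurable]: "exit_time_bound m \<in> borel_measurable M"
  using integrable_exit_time_bound by (rule borel_measurable_integrable)

lemma expectation_exit_time_bound:
  "expectation (exit_time_bound m) = (\<Sum>j<m. walk_mean j (\<lambda>k. indicator {L<..<K} k / real k))"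
proof -
  have "expectation (exit_time_bound m) =
      (\<Sum>j<m. \<integral>\<omega>. X (j, False) \<omega> * (indicator {L<..<K} (walk j \<omega>) / real (walk j \<omega>)) \<partial>M)"
    unfolding exit_time_bound_def by (rule Bochner_Integration.integral_sum) (rule integrable_clock_walk)
  then show ?thesis using walk_mean_clock[of _ "\<lambda>k. indicator {L<..<K} k / real k"] by simp
qed

lemma hitting_time_gt_cases_AE:
  assumes "0 < K" and \<alpha>: "0 < \<alpha>"
  shows "AE \<omega> in M. ereal \<epsilon> < ereal \<alpha> * bd_hitting_time c k0 (\<lambda>i. X i \<omega>) K \<longrightarrow>
    walk m \<omega> \<le> L \<or> walk m \<omega> \<in> {L<..<K} \<or> \<epsilon> / \<alpha> \<le> exit_time_bound m \<omega>"
  using clocks_pos_AE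
proof eventually_elim
  case (elim \<omega>)
  show ?case
  proof (rule impI, rule ccontr)
    assume gt: "ereal \<epsilon> < ereal \<alpha> * bd_hitting_time c k0 (\<lambda>i. X i \<omega>) K"
      and "\<not> (walk m \<omega> \<le> L \<or> walk m \<omega> \<in> {L<..<K} \<or> \<epsilon> / \<alpha> \<le> exit_time_bound m \<omega>)"
    then have "walk m \<omega> = K" "exit_time_bound m \<omega> < \<epsilon> / \<alpha>"
      using walk_range[of m \<omega>] by auto
    then have "bd_hitting_time c k0 (\<lambda>i. X i \<omega>) K \<le> ereal (exit_time_bound m \<omega>)"
      by (intro hitting_time_le_exit_time_bound elim \<open>0 < K\<close>)
    then have "ereal \<alpha> * bd_hitting_time c k0 (\<lambda>i. X i \<omega>) K \<le> ereal \<alpha> * ereal (exit_time_bound m \<omega>)"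
      using \<alpha> by (intro ereal_mult_left_mono) auto
    also have "\<dots> = ereal (\<alpha> * exit_time_bound m \<omega>)" by simp
    also have "\<alpha> * exit_time_bound m \<omega> < \<epsilon>"
      using \<open>exit_time_bound m \<omega> < \<epsilon> / \<alpha>\<close> \<alpha> by (simp add: field_simps)
    finally show False using gt by (auto dest: order.asym)
  qed
qed

lemma prob_exit_time_bound_ge:
  assumes "1 \<le> L" "4 \<le> drift * real L" "0 < t"
  shows "prob {\<omega> \<in> space M. t \<le> exit_time_bound m \<omega>} \<le> 2 / drift * (ln (real K) - ln (real k0)) / t"
proof -
  have "AE \<omega> in M. 0 \<le> exit_time_bound m \<omega>"
    using clocks_pos_AE
    by eventually_elim (auto simp: exit_time_bound_def less_imp_le intro!: sum_nonneg divide_nonneg_nonneg)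
  then have "prob {\<omega> \<in> space M. t \<le> exit_time_bound m \<omega>} \<le> expectation (exit_time_bound m) / t"
    using \<open>0 < t\<close> by (intro integral_Markov_inequality_measure[OF integrable_exit_time_bound]) auto
  also have "\<dots> \<le> 2 / drift * (ln (real K) - ln (real k0)) / t"
    using \<open>0 < t\<close> sum_walk_mean_inverse_le[OF assms(1,2), of m]
    by (intro divide_right_mono) (auto simp: expectation_exit_time_bound)
  finally show ?thesis .
qed

(* The union bound below holds for every number m of steps; its middle term vanishes as m grows. *)

lemma prob_hitting_time_gt:
  assumes L: "1 \<le> L" "4 \<le> drift * real L" and \<alpha>: "0 < \<alpha>" and \<epsilon>: "0 < \<epsilon>"
  shows "prob {\<omega> \<in> space M. ereal \<epsilon> < ereal \<alpha> * bd_hitting_time c k0 (\<lambda>i. X i \<omega>) K}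
    \<le> (1 / (1 + c)) ^ (k0 - L) + 2 / drift * (ln (real K) - ln (real k0)) * \<alpha> / \<epsilon>"
    (is "prob ?B \<le> ?A + ?G")
proof -
  have bound: "prob ?B \<le> ?A + real K / (drift * real m) + ?G" if "0 < m" for m
  proof -
    let ?D = "{\<omega> \<in> space M. walk m \<omega> \<le> L}" and ?S = "{\<omega> \<in> space M. walk m \<omega> \<in> {L<..<K}}"
      and ?T = "{\<omega> \<in> space M. \<epsilon> / \<alpha> \<le> exit_time_bound m \<omega>}"
    have events: "?D \<in> events" "?S \<in> events" "?T \<in> events"
      using sets_walk[of m "{..L}"] sets_walk[of m "{L<..<K}"] by auto
    have "0 < K" using L start_between by simp
    from hitting_time_gt_cases_AE[OF this \<alpha>, of \<epsilon> m]
    have "prob ?B \<le> prob (?D \<union> ?S \<union> ?T)"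
      using events by (intro finite_measure_mono_AE) (auto elim!: eventually_mono)
    also have "\<dots> \<le> prob ?D + prob ?S + prob ?T"
      using events by (intro order_trans[OF measure_Un_le] add_mono[OF measure_Un_le]) auto
    also have "prob ?T \<le> ?G"
      using prob_exit_time_bound_ge[OF L, of "\<epsilon> / \<alpha>" m] \<alpha> \<epsilon> by simp
    finally show ?thesis using prob_walk_le_L[of m] prob_walk_inside[OF that] by linarith
  qed
  have "prob ?B \<le> ?A + real K / drift * inverse (real (Suc m)) + ?G" for m
    using bound[of "Suc m"] by (simp add: divide_inverse mult.assoc)
  moreover have "(\<lambda>m. ?A + real K / drift * inverse (real (Suc m)) + ?G) \<longlonglongrightarrow> ?A + 0 + ?G"
    by (intro tendsto_add tendsto_const tendsto_mult_right_zero LIMSEQ_inverse_real_of_nat)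
  ultimately show ?thesis
    by (intro LIMSEQ_le_const[where a = "prob ?B"]) auto
qed

end

lemma hitting_time_tail_bound:
  fixes M :: "'a measure" and X :: "nat \<times> bool \<Rightarrow> 'a \<Rightarrow> real"
  assumes "prob_space M" "prob_space.indep_vars M (\<lambda>_. borel) X UNIV"
    "\<And>i. distributed M lborel (X i) (exponential_density 1)"
    and c: "0 < c" and "k0 \<le> K" and large: "8 * (2 + c) \<le> c * (real k0 - 1)" and "0 < \<alpha>" "0 < \<epsilon>"
  shows "measure M {\<omega> \<in> space M. ereal \<alpha> * bd_hitting_time c k0 (\<lambda>i. X i \<omega>) K > ereal \<epsilon>}
    \<le> 1 / (1 + c * real k0 / 2) + 2 * (2 + c) / c * (ln (real K) - ln (real k0)) * \<alpha> / \<epsilon>"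
proof -
  define L where "L = k0 div 2"
  interpret exp_clock_walk M X c L K k0
    by (intro exp_clock_walk.intro exp_clock_walk_axioms.intro) (use assms in \<open>auto simp: L_def\<close>)
  have "0 < c * (real k0 - 1)" using large c by (smt (verit))
  then have "1 < k0" using c by (simp add: zero_less_mult_iff)
  then have "1 \<le> L" by (simp add: L_def)
  have "real k0 - 1 \<le> 2 * real L" unfolding L_def by linarith
  then have "c * (real k0 - 1) \<le> c * (2 * real L)" using c by (intro mult_left_mono) auto
  then have "4 * (2 + c) \<le> c * real L" using large by simp
  then have "4 \<le> drift * real L" using c by (simp add: drift_def pos_le_divide_eq)
  note tail = prob_hitting_time_gt[OF \<open>1 \<le> L\<close> this \<open>0 < \<alpha>\<close> \<open>0 < \<epsilon>\<close>]
  have "real k0 / 2 \<le> real (k0 - L)" unfolding L_def by linarith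
  then have "1 + c * real k0 / 2 \<le> 1 + real (k0 - L) * c"
    using c by (simp add: mult.commute mult_left_mono)
  also have "\<dots> \<le> (1 + c) ^ (k0 - L)" using c by (intro Bernoulli_inequality) auto
  finally have "(1 / (1 + c)) ^ (k0 - L) \<le> 1 / (1 + c * real k0 / 2)"
    unfolding power_one_over using c by (intro frac_le) (auto intro: add_pos_nonneg)
  moreover have "2 / drift = 2 * (2 + c) / c" by (simp add: drift_def)
  ultimately show ?thesis using tail by simp
qed

lemma ln_floor_ratio_bounds:
  fixes r y :: real
  assumes "1 < r" "r \<le> y"
  shows "0 \<le> ln (real (nat \<lfloor>y\<rfloor>)) - ln (real (nat \<lfloor>r\<rfloor>))"
    and "ln (real (nat \<lfloor>y\<rfloor>)) - ln (real (nat \<lfloor>r\<rfloor>)) \<le> ln y - ln (r - 1)"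
proof -
  have r: "r - 1 \<le> real (nat \<lfloor>r\<rfloor>)" "0 < r - 1" "0 < real (nat \<lfloor>r\<rfloor>)"
    using assms(1) real_of_int_floor_gt_diff_one[of r] by simp_all
  have y: "real (nat \<lfloor>r\<rfloor>) \<le> real (nat \<lfloor>y\<rfloor>)" "real (nat \<lfloor>y\<rfloor>) \<le> y"
    using assms by (simp_all add: floor_mono nat_mono)
  note ln_mono[OF y(1) r(3)] ln_mono[OF y(2) order_less_le_trans[OF r(3) y(1)]] ln_mono[OF r(1,2)]
  then show "0 \<le> ln (real (nat \<lfloor>y\<rfloor>)) - ln (real (nat \<lfloor>r\<rfloor>))"
    and "ln (real (nat \<lfloor>y\<rfloor>)) - ln (real (nat \<lfloor>r\<rfloor>)) \<le> ln y - ln (r - 1)" by linarith+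
qed

lemma hitting_time_tail_bound_floor:
  fixes M :: "'a measure" and X :: "nat \<times> bool \<Rightarrow> 'a \<Rightarrow> real"
  assumes "prob_space M" "prob_space.indep_vars M (\<lambda>_. borel) X UNIV"
    "\<And>i. distributed M lborel (X i) (exponential_density 1)"
    and a: "0 < a" and \<phi>: "0 < \<psi>" "\<psi> \<le> \<phi>" "\<phi> \<le> 1" and "0 < s" "0 < \<epsilon>"
    and gap: "r + 1 \<le> y" and large: "8 * (2 + a) \<le> a * \<psi> * (r - 2)"
  shows "measure M {\<omega> \<in> space M. ereal (\<phi> / s) * bd_hitting_time (a * \<phi>) (nat \<lfloor>r\<rfloor>) (\<lambda>i. X i \<omega>) (nat \<lfloor>y\<rfloor>) > ereal \<epsilon>}
    \<le> 1 / (1 + a * \<psi> * (r - 1) / 2) + 2 * (2 + a) / (a * \<epsilon>) * ((ln y - ln (r - 1)) / s)"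
proof -
  have "0 < a * \<psi> * (r - 2)" using large a by (smt (verit))
  moreover have "0 < a * \<psi>" using a \<phi> by simp
  ultimately have "2 < r" by (simp add: zero_less_mult_iff)
  have k0: "r - 1 < real (nat \<lfloor>r\<rfloor>)"
    using \<open>2 < r\<close> real_of_int_floor_gt_diff_one[of r] by simp
  have K: "nat \<lfloor>r\<rfloor> \<le> nat \<lfloor>y\<rfloor>" using gap by (simp add: floor_mono nat_mono)
  have "r - 2 \<le> real (nat \<lfloor>r\<rfloor>) - 1" using k0 by linarith
  then have "a * \<psi> * (r - 2) \<le> a * \<phi> * (real (nat \<lfloor>r\<rfloor>) - 1)"
    using a \<phi> \<open>2 < r\<close> by (intro mult_mono) auto
  moreover have "a * \<phi> \<le> a" using a \<phi> by (simp add: mult_left_le)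
  ultimately have "8 * (2 + a * \<phi>) \<le> a * \<phi> * (real (nat \<lfloor>r\<rfloor>) - 1)"
    using large by (simp add: distrib_left)
  note tail = hitting_time_tail_bound[OF assms(1-3) _ K this, of "\<phi> / s" \<epsilon>]
  have "1 / (1 + a * \<phi> * real (nat \<lfloor>r\<rfloor>) / 2) \<le> 1 / (1 + a * \<psi> * (r - 1) / 2)"
  proof (rule frac_le)
    have "a * \<psi> * (r - 1) \<le> a * \<phi> * real (nat \<lfloor>r\<rfloor>)"
      using a \<phi> k0 \<open>2 < r\<close> by (intro mult_mono) auto
    then show "1 + a * \<psi> * (r - 1) / 2 \<le> 1 + a * \<phi> * real (nat \<lfloor>r\<rfloor>) / 2" by simp
    show "0 < 1 + a * \<psi> * (r - 1) / 2" using a \<phi> \<open>2 < r\<close> by (simp add: add_pos_nonneg)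
  qed simp_all
  moreover have "2 * (2 + a * \<phi>) / (a * \<phi>) * (ln (real (nat \<lfloor>y\<rfloor>)) - ln (real (nat \<lfloor>r\<rfloor>))) * (\<phi> / s) / \<epsilon>
      \<le> 2 * (2 + a) / (a * \<epsilon>) * ((ln y - ln (r - 1)) / s)"
  proof -
    have "1 < r" "r \<le> y" using \<open>2 < r\<close> gap by linarith+
    note ln_ratio = ln_floor_ratio_bounds[OF this]
    have "2 * (2 + a * \<phi>) / (a * \<epsilon>) * ((ln (real (nat \<lfloor>y\<rfloor>)) - ln (real (nat \<lfloor>r\<rfloor>))) / s)
        \<le> 2 * (2 + a) / (a * \<epsilon>) * ((ln y - ln (r - 1)) / s)"
      using a \<phi> \<open>0 < s\<close> \<open>0 < \<epsilon>\<close> ln_ratio by (intro mult_mono divide_right_mono) (auto simp: mult_left_le)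
    moreover have "2 * (2 + a * \<phi>) / (a * \<phi>) * (ln (real (nat \<lfloor>y\<rfloor>)) - ln (real (nat \<lfloor>r\<rfloor>))) * (\<phi> / s) / \<epsilon>
        = 2 * (2 + a * \<phi>) / (a * \<epsilon>) * ((ln (real (nat \<lfloor>y\<rfloor>)) - ln (real (nat \<lfloor>r\<rfloor>))) / s)"
      using a \<phi> \<open>0 < s\<close> \<open>0 < \<epsilon>\<close> by (simp add: field_simps)
    ultimately show ?thesis by simp
  qed
  ultimately show ?thesis using tail a \<phi> \<open>0 < s\<close> \<open>0 < \<epsilon>\<close> by simp
qed

lemma eventually_powr_le_of_neg_log_tendsto:
  fixes \<phi> :: "nat \<Rightarrow> real"
  assumes lim: "(\<lambda>N. - log (real N) (\<phi> N)) \<longlonglongrightarrow> b" and "b < \<beta>" and pos: "\<And>N. 0 < \<phi> N"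
  shows "eventually (\<lambda>N. real N powr (- \<beta>) \<le> \<phi> N) sequentially"
  using order_tendstoD(2)[OF lim \<open>b < \<beta>\<close>] eventually_ge_at_top[of 2]
proof eventually_elim
  case (elim N)
  then have "- \<beta> < log (real N) (\<phi> N)" "1 < real N" by auto
  then have "real N powr (- \<beta>) \<le> real N powr (log (real N) (\<phi> N))" by (intro powr_mono) auto
  also have "\<dots> = \<phi> N" using \<open>1 < real N\<close> pos[of N] by simp
  finally show ?case .
qed

lemma eventually_hitting_time_tail_le:
  fixes \<phi> :: "nat \<Rightarrow> real" and M :: "nat \<Rightarrow> 'a measure" and X :: "nat \<Rightarrow> nat \<times> bool \<Rightarrow> 'a \<Rightarrow> real"
  assumes prob: "\<And>N. prob_space (M N)"
    and indep: "\<And>N. prob_space.indep_vars (M N) (\<lambda>_. borel) (X N) UNIV"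
    and expo: "\<And>N i. distributed (M N) lborel (X N i) (exponential_density 1)"
    and a: "0 < a" and \<phi>: "\<And>N. \<phi> N \<le> 1" "eventually (\<lambda>N. real N powr (- \<beta>) \<le> \<phi> N) sequentially"
    and "\<beta> < 1" "0 < \<epsilon>"
  shows "eventually (\<lambda>N. measure (M N) {\<omega> \<in> space (M N). ereal (\<phi> N / sqrt (ln (real N))) *
      bd_hitting_time (a * \<phi> N) (nat \<lfloor>real N / sqrt (ln (real N))\<rfloor>) (\<lambda>i. X N i \<omega>)
        (nat \<lfloor>real N * (1 - 1 / sqrt (ln (real N)))\<rfloor>) > ereal \<epsilon>}
    \<le> 1 / (1 + a * real N powr (- \<beta>) * (real N / sqrt (ln (real N)) - 1) / 2)
      + 2 * (2 + a) / (a * \<epsilon>) * ((ln (real N * (1 - 1 / sqrt (ln (real N))))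
        - ln (real N / sqrt (ln (real N)) - 1)) / sqrt (ln (real N)))) sequentially"
proof -
  have "eventually (\<lambda>N. 0 < sqrt (ln (real N))) sequentially" by real_asymp
  moreover have "eventually (\<lambda>N. 0 < real N powr (- \<beta>)) sequentially" by real_asymp
  moreover have "eventually (\<lambda>N. real N / sqrt (ln (real N)) + 1 \<le> real N * (1 - 1 / sqrt (ln (real N)))) sequentially"
    by real_asymp
  moreover have "eventually (\<lambda>N. 8 * (2 + a) \<le> a * real N powr (- \<beta>) * (real N / sqrt (ln (real N)) - 2)) sequentially"
    using \<open>\<beta> < 1\<close> a by real_asymp
  ultimately show ?thesis using \<phi>(2)
  proof eventually_elim
    case (elim N)
    show ?case
      by (rule hitting_time_tail_bound_floor[OF prob indep expo a elim(2) elim(5) \<phi>(1) elim(1) \<open>0 < \<epsilon>\<close> elim(3) elim(4)])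
  qed
qed

theorem proposition3p3:
  fixes a b :: real and \<phi> :: "nat \<Rightarrow> real"
    and M :: "nat \<Rightarrow> 'a measure" and X :: "nat \<Rightarrow> nat \<times> bool \<Rightarrow> 'a \<Rightarrow> real"
  assumes a_pos: "a > 0"
    and phi_bounds: "\<And>N. 0 < \<phi> N \<and> \<phi> N \<le> 1"
    and phi_lim: "(\<lambda>N. - log (real N) (\<phi> N)) \<longlonglongrightarrow> b"
    and b_range: "0 \<le> b" "b < 1"
    and prob: "\<And>N. prob_space (M N)"
    and indep: "\<And>N. prob_space.indep_vars (M N) (\<lambda>_. borel) (X N) UNIV"
    and expo: "\<And>N i. distributed (M N) lborel (X N i) (exponential_density 1)"
  shows "\<forall>\<epsilon>>0. (\<lambda>N. measure (M N)
           {\<omega> \<in> space (M N).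
              ereal (\<phi> N / sqrt (ln (real N))) *
                bd_hitting_time (a * \<phi> N) (nat \<lfloor>real N / sqrt (ln (real N))\<rfloor>) (\<lambda>i. X N i \<omega>)
                  (nat \<lfloor>real N * (1 - 1 / sqrt (ln (real N)))\<rfloor>) > ereal \<epsilon>})
         \<longlonglongrightarrow> 0"
proof (intro allI impI)
  fix \<epsilon> :: real assume "0 < \<epsilon>"
  define \<beta> where "\<beta> = (1 + b) / 2"
  have \<beta>: "b < \<beta>" "\<beta> < 1" using b_range by (auto simp: \<beta>_def)
  have "eventually (\<lambda>N. real N powr (- \<beta>) \<le> \<phi> N) sequentially"
    using eventually_powr_le_of_neg_log_tendsto[OF phi_lim \<beta>(1)] phi_bounds by blast
  note tail_le = eventually_hitting_time_tail_le[OF prob indep expo a_pos _ this \<beta>(2) \<open>0 < \<epsilon>\<close>]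
  have bound_lim: "(\<lambda>N. 1 / (1 + a * real N powr (- \<beta>) * (real N / sqrt (ln (real N)) - 1) / 2)
      + 2 * (2 + a) / (a * \<epsilon>) * ((ln (real N * (1 - 1 / sqrt (ln (real N))))
        - ln (real N / sqrt (ln (real N)) - 1)) / sqrt (ln (real N)))) \<longlonglongrightarrow> 0"
    using \<beta> a_pos \<open>0 < \<epsilon>\<close> by real_asymp
  show "(\<lambda>N. measure (M N) {\<omega> \<in> space (M N). ereal (\<phi> N / sqrt (ln (real N))) *
      bd_hitting_time (a * \<phi> N) (nat \<lfloor>real N / sqrt (ln (real N))\<rfloor>) (\<lambda>i. X N i \<omega>)
        (nat \<lfloor>real N * (1 - 1 / sqrt (ln (real N)))\<rfloor>) > ereal \<epsilon>}) \<longlonglongrightarrow> 0"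
    using phi_bounds by (intro tendsto_sandwich[OF always_eventually tail_le tendsto_const bound_lim]) simp_all
qed

end
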